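(* For all types $\tau_1,\tau_2,\tau_p$ with $\tau_p=\tau_1+\tau_2$, every heap $H$ and value $v$: $\mathrm{own}(H,v,\tau_p)=\mathrm{own}(H,v,\tau_1)+\mathrm{own}(H,v,\tau_2)$.
   Context: Types $\tau ::= \{\nu:\mathtt{int}\mid\varphi\}\mid\tau\ \mathtt{ref}^r$, with $\varphi$ a refinement formula and $r\in[0,1]$ rational. Type addition is the least commutative partial operation satisfying $\{\nu:\mathtt{int}\mid\varphi_1\}+\{\nu:\mathtt{int}\mid\varphi_2\}=\{\nu:\mathtt{int}\mid\varphi_1\wedge\varphi_2\}$ and $\tau_1\ \mathtt{ref}^{r_1}+\tau_2\ \mathtt{ref}^{r_2}=(\tau_1+\tau_2)\ \mathtt{ref}^{r_1+r_2}$. Values: integers or addresses; a heap $H$ is a finite partial map from addresses to values. Ownership maps are functions from addresses to nonnegative rationals, added pointwise; $\{a\mapsto r\}$ maps $a$ to $r$ and everything else to 0; $\emptyset$ is the zero map. $\mathrm{own}(H,v,\tau)=\{a\mapsto r\}+\mathrm{own}(H,H(a),\tau')$ if $v$ is an address $a\in dom(H)$ and $\tau=\tau'\ \mathtt{ref}^r$; otherwise $\mathrm{own}(H,v,\tau)=\emptyset$. *)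

theory Defs
  imports Main "HOL.Rat"
begin

(* Refinement formulas: syntax left abstract (atoms of type 'a), closed under conjunction. *)
datatype 'a form = FAtom 'a | FConj "'a form" "'a form"

(* Types: {nu:int | phi}  and  tau ref^r *)
datatype 'a ty = TInt "'a form" | TRef "'a ty" rat

fun wf_ty :: "'a ty \<Rightarrow> bool" where
  "wf_ty (TInt \<phi>) = True"
| "wf_ty (TRef t r) = (0 \<le> r \<and> r \<le> 1 \<and> wf_ty t)"

(* Type addition: the least commutative partial operation with the two defining equations;
   None means undefined. *)
fun tadd :: "'a ty \<Rightarrow> 'a ty \<Rightarrow> 'a ty option" where
  "tadd (TInt \<phi>1) (TInt \<phi>2) = Some (TInt (FConj \<phi>1 \<phi>2))"
| "tadd (TRef t1 r1) (TRef t2 r2) =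
     (case tadd t1 t2 of None \<Rightarrow> None | Some t \<Rightarrow> Some (TRef t (r1 + r2)))"
| "tadd _ _ = None"

type_synonym addr = nat

datatype val = VInt int | VAddr addr

type_synonym heap = "addr \<rightharpoonup> val"

definition single :: "addr \<Rightarrow> rat \<Rightarrow> (addr \<Rightarrow> rat)" where
  "single a r = (\<lambda>x. if x = a then r else 0)"

fun own :: "heap \<Rightarrow> val \<Rightarrow> 'a ty \<Rightarrow> (addr \<Rightarrow> rat)" where
  "own H (VAddr a) (TRef t r) =
     (case H a of Some w \<Rightarrow> (\<lambda>x. single a r x + own H w t x) | None \<Rightarrow> (\<lambda>_. 0))"
| "own H v t = (\<lambda>_. 0)"

end

theory Submission
  imports Defs
begin

lemma own_tadd:
  assumes "tadd t1 t2 = Some tp"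
  shows "own H v tp = (\<lambda>x. own H v t1 x + own H v t2 x)"
  using assms
proof (induction t1 t2 arbitrary: tp v rule: tadd.induct)
  case (1 \<phi>1 \<phi>2)
  then show ?case by (cases v) auto
next
  case (2 t1 r1 t2 r2)
  then obtain t where t: "tadd t1 t2 = Some t" and tp: "tp = TRef t (r1 + r2)"
    by (auto split: option.splits)
  show ?case
  proof (cases v)
    case (VInt i)
    with tp show ?thesis by simp
  next
    case (VAddr a)
    show ?thesis
    proof (cases "H a")
      case None
      with VAddr tp show ?thesis by simp
    next
      case (Some w)
      with VAddr tp "2.IH"[OF t, of w] show ?thesis
        by (simp add: single_def fun_eq_iff algebra_simps)
    qed
  qed
qed auto

theorem lemma15:
  fixes \<tau>1 \<tau>2 \<tau>p :: "'a ty" and H :: heap and v :: val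
  assumes "wf_ty \<tau>1" and "wf_ty \<tau>2" and "wf_ty \<tau>p"
    and "tadd \<tau>1 \<tau>2 = Some \<tau>p"
  shows "own H v \<tau>p = (\<lambda>a. own H v \<tau>1 a + own H v \<tau>2 a)"
  using own_tadd[OF assms(4)] .

end
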